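(* Fix $k\ge0$ and let $\Lambda$ be a locally convex $(k+1)$-graph with $\Gamma=d^{-1}(\mathbb N^k\times\{0\})$. If $v\in\Lambda^0$ and $F\subseteq v\Gamma$ is a finite set that is exhaustive in $\Gamma$, then $F$ is exhaustive in $\Lambda$.
   Context: A $(k+1)$-graph is a countable small category $\Lambda$ with a functor $d:\Lambda\to\mathbb N^{k+1}$ such that whenever $d(\lambda)=m+n$ there are unique $\mu,\nu$ with $\lambda=\mu\nu$, $d(\mu)=m$, $d(\nu)=n$; $\Lambda^n=d^{-1}(n)$, $e_i$ the standard basis vectors. $\Lambda$ is locally convex if for $i\ne j$, whenever $e\in\Lambda^{e_i}$ and $r(e)\Lambda^{e_j}\ne\emptyset$, we have $s(e)\Lambda^{e_j}\ne\emptyset$. $\Gamma$ is a $k$-graph (subcategory). For a category $\mathcal C$ and $v\in\mathcal C^0$, $F\subseteq v\mathcal C$ is exhaustive in $\mathcal C$ if for every $c\in v\mathcal C$ there is $a\in F$ with $c\mathcal C\cap a\mathcal C\ne\emptyset$. *)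

theory Defs
  imports "HOL-Library.Countable_Set"
begin

text \<open>Degrees in \<open>\<nat>^n\<close> are represented as functions \<open>nat \<Rightarrow> nat\<close> vanishing at
  indices \<open>\<ge> n\<close>; coordinates are indexed \<open>0,\<dots>,n-1\<close>.\<close>

definition dadd :: "(nat \<Rightarrow> nat) \<Rightarrow> (nat \<Rightarrow> nat) \<Rightarrow> nat \<Rightarrow> nat" where
  "dadd m p = (\<lambda>i. m i + p i)"

definition basis :: "nat \<Rightarrow> nat \<Rightarrow> nat" where
  "basis i = (\<lambda>j. if j = i then 1 else 0)"

definition is_category ::
  "'v set \<Rightarrow> 'a set \<Rightarrow> ('a \<Rightarrow> 'v) \<Rightarrow> ('a \<Rightarrow> 'v) \<Rightarrow> ('a \<Rightarrow> 'a \<Rightarrow> 'a) \<Rightarrow> ('v \<Rightarrow> 'a) \<Rightarrow> bool" where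
  "is_category Obj Mor r s cmp idm \<longleftrightarrow>
     (\<forall>\<mu>\<in>Mor. r \<mu> \<in> Obj \<and> s \<mu> \<in> Obj) \<and>
     (\<forall>v\<in>Obj. idm v \<in> Mor \<and> r (idm v) = v \<and> s (idm v) = v) \<and>
     (\<forall>\<mu>\<in>Mor. \<forall>\<nu>\<in>Mor. s \<mu> = r \<nu> \<longrightarrow>
        cmp \<mu> \<nu> \<in> Mor \<and> r (cmp \<mu> \<nu>) = r \<mu> \<and> s (cmp \<mu> \<nu>) = s \<nu>) \<and>
     (\<forall>\<mu>\<in>Mor. cmp (idm (r \<mu>)) \<mu> = \<mu> \<and> cmp \<mu> (idm (s \<mu>)) = \<mu>) \<and>
     (\<forall>\<mu>\<in>Mor. \<forall>\<nu>\<in>Mor. \<forall>\<rho>\<in>Mor. s \<mu> = r \<nu> \<longrightarrow> s \<nu> = r \<rho> \<longrightarrow>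
        cmp (cmp \<mu> \<nu>) \<rho> = cmp \<mu> (cmp \<nu> \<rho>))"

definition is_kgraph ::
  "nat \<Rightarrow> 'v set \<Rightarrow> 'a set \<Rightarrow> ('a \<Rightarrow> 'v) \<Rightarrow> ('a \<Rightarrow> 'v) \<Rightarrow> ('a \<Rightarrow> 'a \<Rightarrow> 'a) \<Rightarrow> ('v \<Rightarrow> 'a)
     \<Rightarrow> ('a \<Rightarrow> nat \<Rightarrow> nat) \<Rightarrow> bool" where
  "is_kgraph n Obj Mor r s cmp idm d \<longleftrightarrow>
     is_category Obj Mor r s cmp idm \<and> countable Obj \<and> countable Mor \<and>
     (\<forall>\<mu>\<in>Mor. \<forall>i\<ge>n. d \<mu> i = 0) \<and>
     (\<forall>v\<in>Obj. d (idm v) = (\<lambda>_. 0)) \<and>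
     (\<forall>\<mu>\<in>Mor. \<forall>\<nu>\<in>Mor. s \<mu> = r \<nu> \<longrightarrow> d (cmp \<mu> \<nu>) = dadd (d \<mu>) (d \<nu>)) \<and>
     (\<forall>l\<in>Mor. \<forall>m p. d l = dadd m p \<longrightarrow>
        (\<exists>\<mu>\<in>Mor. \<exists>\<nu>\<in>Mor. s \<mu> = r \<nu> \<and> cmp \<mu> \<nu> = l \<and> d \<mu> = m \<and> d \<nu> = p \<and>
          (\<forall>\<mu>'\<in>Mor. \<forall>\<nu>'\<in>Mor. s \<mu>' = r \<nu>' \<and> cmp \<mu>' \<nu>' = l \<and> d \<mu>' = m \<and> d \<nu>' = p
             \<longrightarrow> \<mu>' = \<mu> \<and> \<nu>' = \<nu>)))"

definition locally_convex ::
  "nat \<Rightarrow> 'a set \<Rightarrow> ('a \<Rightarrow> 'v) \<Rightarrow> ('a \<Rightarrow> 'v) \<Rightarrow> ('a \<Rightarrow> nat \<Rightarrow> nat) \<Rightarrow> bool" where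
  "locally_convex n Mor r s d \<longleftrightarrow>
     (\<forall>i<n. \<forall>j<n. i \<noteq> j \<longrightarrow> (\<forall>e\<in>Mor. d e = basis i \<longrightarrow>
        (\<exists>f\<in>Mor. r f = r e \<and> d f = basis j) \<longrightarrow>
        (\<exists>f\<in>Mor. r f = s e \<and> d f = basis j)))"

text \<open>\<open>F\<close> (assumed \<open>\<subseteq> v C\<close>) is exhaustive in the category with morphism set \<open>C\<close>:
  every \<open>c \<in> vC\<close> has some \<open>a \<in> F\<close> with \<open>cC \<inter> aC \<noteq> \<emptyset>\<close>.\<close>

definition exhaustive ::
  "'a set \<Rightarrow> ('a \<Rightarrow> 'v) \<Rightarrow> ('a \<Rightarrow> 'v) \<Rightarrow> ('a \<Rightarrow> 'a \<Rightarrow> 'a) \<Rightarrow> 'v \<Rightarrow> 'a set \<Rightarrow> bool" where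
  "exhaustive C r s cmp v F \<longleftrightarrow>
     (\<forall>c\<in>C. r c = v \<longrightarrow> (\<exists>a\<in>F. \<exists>x\<in>C. \<exists>y\<in>C.
        s c = r x \<and> s a = r y \<and> cmp c x = cmp a y))"

end

theory Submission
  imports Defs
begin

text \<open>Let \<open>\<Gamma>\<close> consist of the paths of degree \<open>0\<close> in coordinate \<open>k\<close>. Factor \<open>p \<in> v\<Lambda>\<close> as
  \<open>p = \<gamma>\<kappa>\<close> with \<open>\<gamma> \<in> \<Gamma>\<close> and \<open>d \<kappa>\<close> a multiple of \<open>e\<^sub>k\<close>. Exhaustiveness in \<open>\<Gamma>\<close> gives
  \<open>a \<in> F\<close> and \<open>\<gamma>x = ay\<close>. If \<open>d a \<le> d \<gamma>\<close>, unique factorisation yields \<open>\<gamma> = az\<close>, so \<open>p\<close> extends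
  \<open>a\<close>. Otherwise \<open>d \<gamma> j < d a j\<close> for some \<open>j \<noteq> k\<close>, so \<open>x\<close> starts with an \<open>e\<^sub>j\<close>-edge at
  \<open>s \<gamma> = r \<kappa>\<close>; local convexity, applied edge by edge along \<open>\<kappa>\<close>, provides an \<open>e\<^sub>j\<close>-edge \<open>f\<close> at
  \<open>s p\<close>. Replacing \<open>p\<close> by \<open>pf\<close> raises \<open>d p j\<close>, which cannot go on beyond the finitely many
  degrees of elements of \<open>F\<close>.\<close>

locale kgraph =
  fixes n :: nat and Obj :: "'v set" and Mor :: "'a set" and r s :: "'a \<Rightarrow> 'v"
    and cmp :: "'a \<Rightarrow> 'a \<Rightarrow> 'a" and idm :: "'v \<Rightarrow> 'a" and d :: "'a \<Rightarrow> nat \<Rightarrow> nat"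
  assumes kgraph: "is_kgraph n Obj Mor r s cmp idm d"
begin

lemmas kgraph_unfolded = kgraph[unfolded is_kgraph_def is_category_def]

lemma r_in_Obj: "\<mu> \<in> Mor \<Longrightarrow> r \<mu> \<in> Obj"
  and s_in_Obj: "\<mu> \<in> Mor \<Longrightarrow> s \<mu> \<in> Obj"
  using kgraph_unfolded by blast+

lemma idm_in_Mor: "u \<in> Obj \<Longrightarrow> idm u \<in> Mor"
  and r_idm: "u \<in> Obj \<Longrightarrow> r (idm u) = u"
  and s_idm: "u \<in> Obj \<Longrightarrow> s (idm u) = u"
  using kgraph_unfolded by blast+

lemma cmp_in_Mor: "\<mu> \<in> Mor \<Longrightarrow> \<nu> \<in> Mor \<Longrightarrow> s \<mu> = r \<nu> \<Longrightarrow> cmp \<mu> \<nu> \<in> Mor"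
  and r_cmp: "\<mu> \<in> Mor \<Longrightarrow> \<nu> \<in> Mor \<Longrightarrow> s \<mu> = r \<nu> \<Longrightarrow> r (cmp \<mu> \<nu>) = r \<mu>"
  and s_cmp: "\<mu> \<in> Mor \<Longrightarrow> \<nu> \<in> Mor \<Longrightarrow> s \<mu> = r \<nu> \<Longrightarrow> s (cmp \<mu> \<nu>) = s \<nu>"
  using kgraph_unfolded by blast+

lemma cmp_idm_left: "\<mu> \<in> Mor \<Longrightarrow> cmp (idm (r \<mu>)) \<mu> = \<mu>"
  and cmp_idm_right: "\<mu> \<in> Mor \<Longrightarrow> cmp \<mu> (idm (s \<mu>)) = \<mu>"
  using kgraph_unfolded by blast+

lemma cmp_assoc:
  "\<mu> \<in> Mor \<Longrightarrow> \<nu> \<in> Mor \<Longrightarrow> \<rho> \<in> Mor \<Longrightarrow> s \<mu> = r \<nu> \<Longrightarrow> s \<nu> = r \<rho> \<Longrightarrow>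
    cmp (cmp \<mu> \<nu>) \<rho> = cmp \<mu> (cmp \<nu> \<rho>)"
  using kgraph_unfolded by blast

lemma degree_vanishes: "\<mu> \<in> Mor \<Longrightarrow> n \<le> i \<Longrightarrow> d \<mu> i = 0"
  and degree_idm: "u \<in> Obj \<Longrightarrow> d (idm u) = (\<lambda>_. 0)"
  and degree_cmp: "\<mu> \<in> Mor \<Longrightarrow> \<nu> \<in> Mor \<Longrightarrow> s \<mu> = r \<nu> \<Longrightarrow> d (cmp \<mu> \<nu>) = dadd (d \<mu>) (d \<nu>)"
  using kgraph_unfolded by blast+

lemma factorisation:
  assumes "l \<in> Mor" "d l = dadd m p"
  obtains \<mu> \<nu> where "\<mu> \<in> Mor" "\<nu> \<in> Mor" "s \<mu> = r \<nu>" "cmp \<mu> \<nu> = l" "d \<mu> = m" "d \<nu> = p"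
  using assms kgraph_unfolded by blast

lemma factorisation_unique:
  assumes "\<mu> \<in> Mor" "\<nu> \<in> Mor" "\<mu>' \<in> Mor" "\<nu>' \<in> Mor" "s \<mu> = r \<nu>" "s \<mu>' = r \<nu>'"
    and "cmp \<mu> \<nu> = cmp \<mu>' \<nu>'" "d \<mu> = d \<mu>'" "d \<nu> = d \<nu>'"
  shows "\<mu> = \<mu>' \<and> \<nu> = \<nu>'"
proof -
  have "cmp \<mu> \<nu> \<in> Mor" "d (cmp \<mu> \<nu>) = dadd (d \<mu>) (d \<nu>)"
    using assms by (simp_all add: cmp_in_Mor degree_cmp)
  then obtain \<mu>0 \<nu>0 where "\<forall>\<mu>'\<in>Mor. \<forall>\<nu>'\<in>Mor.
      s \<mu>' = r \<nu>' \<and> cmp \<mu>' \<nu>' = cmp \<mu> \<nu> \<and> d \<mu>' = d \<mu> \<and> d \<nu>' = d \<nu> \<longrightarrow> \<mu>' = \<mu>0 \<and> \<nu>' = \<nu>0"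
    using kgraph_unfolded by metis
  then show ?thesis using assms by metis
qed

lemma s_eq_r_if_degree_zero:
  assumes "\<mu> \<in> Mor" "d \<mu> = (\<lambda>_. 0)"
  shows "s \<mu> = r \<mu>"
proof -
  have "idm (r \<mu>) = \<mu>"
    using factorisation_unique[of "idm (r \<mu>)" \<mu> \<mu> "idm (s \<mu>)"] assms
    by (simp add: r_in_Obj s_in_Obj idm_in_Mor r_idm s_idm cmp_idm_left cmp_idm_right degree_idm)
  then show ?thesis using assms(1) by (metis r_in_Obj s_idm)
qed

lemma factor_through_if_degree_le:
  assumes "\<gamma> \<in> Mor" "x \<in> Mor" "a \<in> Mor" "y \<in> Mor" "s \<gamma> = r x" "s a = r y"
    and eq: "cmp \<gamma> x = cmp a y" and le: "\<And>i. d a i \<le> d \<gamma> i"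
  obtains z where "z \<in> Mor" "r z = s a" "s z = s \<gamma>" "\<gamma> = cmp a z"
proof -
  have "dadd (d \<gamma>) (d x) = dadd (d a) (d y)"
    using degree_cmp[of \<gamma> x] degree_cmp[of a y] assms by simp
  then have "d y = dadd (\<lambda>i. d \<gamma> i - d a i) (d x)"
    using le by (auto simp: dadd_def fun_eq_iff)
  then obtain z y2 where z: "z \<in> Mor" "y2 \<in> Mor" "s z = r y2" "cmp z y2 = y"
      "d z = (\<lambda>i. d \<gamma> i - d a i)" "d y2 = d x"
    by (rule factorisation[OF assms(4)])
  have rz: "r z = s a" using r_cmp[of z y2] z assms by simp
  have az: "cmp a z \<in> Mor" "s (cmp a z) = r y2"
    using cmp_in_Mor[of a z] s_cmp[of a z] assms z rz by simp_all
  have "cmp \<gamma> x = cmp (cmp a z) y2" using eq cmp_assoc[of a z y2] z assms rz by simp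
  moreover have "d \<gamma> = d (cmp a z)"
    using degree_cmp[of a z] assms z rz le by (auto simp: dadd_def fun_eq_iff)
  ultimately have "\<gamma> = cmp a z"
    using factorisation_unique[OF assms(1,2) az(1) z(2) assms(5) az(2)] z(6) by simp
  moreover have "s z = s \<gamma>" using s_cmp[of a z] calculation assms z rz by simp
  ultimately show ?thesis using that z rz by blast
qed

lemma locally_convex_transport_edge:
  assumes lc: "locally_convex n Mor r s d" and "k < n" "j < n" "j \<noteq> k"
  shows "\<kappa> \<in> Mor \<Longrightarrow> d \<kappa> = (\<lambda>i. if i = k then m else 0) \<Longrightarrow>
    e \<in> Mor \<Longrightarrow> r e = r \<kappa> \<Longrightarrow> d e = basis j \<Longrightarrow> \<exists>f\<in>Mor. r f = s \<kappa> \<and> d f = basis j"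
proof (induction m arbitrary: \<kappa> e)
  case 0
  then show ?case using s_eq_r_if_degree_zero[of \<kappa>] by auto
next
  case (Suc m)
  have "d \<kappa> = dadd (basis k) (\<lambda>i. if i = k then m else 0)"
    using Suc.prems by (auto simp: dadd_def basis_def)
  then obtain g \<kappa>' where g: "g \<in> Mor" "\<kappa>' \<in> Mor" "s g = r \<kappa>'" "cmp g \<kappa>' = \<kappa>"
      "d g = basis k" "d \<kappa>' = (\<lambda>i. if i = k then m else 0)"
    by (rule factorisation[OF Suc.prems(1)])
  have "r g = r \<kappa>" "s \<kappa>' = s \<kappa>" using r_cmp[OF g(1-3)] s_cmp[OF g(1-3)] g(4) by simp_all
  moreover have "\<forall>g\<in>Mor. d g = basis k \<longrightarrow> (\<exists>f\<in>Mor. r f = r g \<and> d f = basis j) \<longrightarrow>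
      (\<exists>f\<in>Mor. r f = s g \<and> d f = basis j)"
    using lc assms(2-4) unfolding locally_convex_def by blast
  ultimately obtain f where "f \<in> Mor" "r f = r \<kappa>'" "d f = basis j"
    using g Suc.prems by force
  then show ?case using Suc.IH[OF g(2,6)] \<open>s \<kappa>' = s \<kappa>\<close> by simp
qed

definition common_extension :: "'a \<Rightarrow> 'a \<Rightarrow> bool" where
  "common_extension \<mu> a \<longleftrightarrow>
    (\<exists>x\<in>Mor. \<exists>y\<in>Mor. s \<mu> = r x \<and> s a = r y \<and> cmp \<mu> x = cmp a y)"

lemma exhaustive_iff_common_extension:
  "exhaustive Mor r s cmp v F \<longleftrightarrow> (\<forall>\<mu>\<in>Mor. r \<mu> = v \<longrightarrow> (\<exists>a\<in>F. common_extension \<mu> a))"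
  unfolding exhaustive_def common_extension_def by blast

lemma common_extension_of_cmp:
  assumes \<mu>f: "\<mu> \<in> Mor" "f \<in> Mor" "s \<mu> = r f" and "common_extension (cmp \<mu> f) a"
  shows "common_extension \<mu> a"
proof -
  obtain x y where xy: "x \<in> Mor" "y \<in> Mor" "s f = r x" "s a = r y" "cmp (cmp \<mu> f) x = cmp a y"
    using assms(4) s_cmp[OF \<mu>f] unfolding common_extension_def by auto
  have "cmp f x \<in> Mor" "s \<mu> = r (cmp f x)" "cmp \<mu> (cmp f x) = cmp a y"
    using cmp_in_Mor[OF \<mu>f(2) xy(1,3)] r_cmp[OF \<mu>f(2) xy(1,3)] cmp_assoc[OF \<mu>f(1,2) xy(1) \<mu>f(3) xy(3)]
      xy(5) \<mu>f(3) by simp_all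
  then show ?thesis unfolding common_extension_def using xy(2,4) by blast
qed

lemma common_extension_or_edge:
  assumes lc: "locally_convex n Mor r s d" and "k < n"
    and F: "F \<subseteq> {\<mu> \<in> Mor. d \<mu> k = 0 \<and> r \<mu> = v}"
    and ex: "exhaustive {\<mu> \<in> Mor. d \<mu> k = 0} r s cmp v F"
    and p: "p \<in> Mor" "r p = v"
  shows "(\<exists>a\<in>F. common_extension p a) \<or>
    (\<exists>a\<in>F. \<exists>j\<in>{..<n} - {k}. \<exists>f\<in>Mor. r f = s p \<and> d f = basis j \<and> d p j < d a j)"
proof -
  have "d p = dadd (\<lambda>i. if i = k then 0 else d p i) (\<lambda>i. if i = k then d p k else 0)"
    by (auto simp: dadd_def)
  then obtain \<gamma> \<kappa> where \<gamma>\<kappa>: "\<gamma> \<in> Mor" "\<kappa> \<in> Mor" "s \<gamma> = r \<kappa>" "cmp \<gamma> \<kappa> = p"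
      "d \<gamma> = (\<lambda>i. if i = k then 0 else d p i)" "d \<kappa> = (\<lambda>i. if i = k then d p k else 0)"
    by (rule factorisation[OF p(1)])
  have r\<gamma>: "r \<gamma> = v" and s\<kappa>: "s \<kappa> = s p"
    using r_cmp[OF \<gamma>\<kappa>(1-3)] s_cmp[OF \<gamma>\<kappa>(1-3)] \<gamma>\<kappa>(4) p(2) by simp_all
  obtain a x y where axy: "a \<in> F" "x \<in> Mor" "y \<in> Mor" "s \<gamma> = r x" "s a = r y" "cmp \<gamma> x = cmp a y"
    using ex \<gamma>\<kappa>(1,5) r\<gamma> unfolding exhaustive_def by auto
  have a: "a \<in> Mor" "d a k = 0" using F axy(1) by auto
  show ?thesis
  proof (cases "\<forall>j\<in>{..<n} - {k}. d a j \<le> d \<gamma> j")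
    case True
    then have "d a i \<le> d \<gamma> i" for i
      using a degree_vanishes[of a i] by (cases "i < n") auto
    then obtain z where z: "z \<in> Mor" "r z = s a" "s z = s \<gamma>" "\<gamma> = cmp a z"
      using factor_through_if_degree_le[OF \<gamma>\<kappa>(1) axy(2) a(1) axy(3) axy(4,5,6)] by blast
    have z\<kappa>: "cmp z \<kappa> \<in> Mor" "r (cmp z \<kappa>) = s a"
      using cmp_in_Mor[of z \<kappa>] r_cmp[of z \<kappa>] z \<gamma>\<kappa>(2,3) by simp_all
    have "cmp p (idm (s p)) = cmp a (cmp z \<kappa>)"
      using cmp_idm_right[OF p(1)] cmp_assoc[of a z \<kappa>] \<gamma>\<kappa>(2-4) z a(1) by simp
    moreover have "idm (s p) \<in> Mor" "s p = r (idm (s p))"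
      using idm_in_Mor[OF s_in_Obj[OF p(1)]] r_idm[OF s_in_Obj[OF p(1)]] by simp_all
    ultimately have "common_extension p a"
      unfolding common_extension_def using z\<kappa>
      by (intro bexI[of _ "idm (s p)"] bexI[of _ "cmp z \<kappa>"] conjI) simp_all
    then show ?thesis using axy(1) by blast
  next
    case False
    then obtain j where j: "j \<in> {..<n} - {k}" "d \<gamma> j < d a j" using not_le by blast
    have "d \<gamma> j + d x j = d a j + d y j"
      using degree_cmp[OF \<gamma>\<kappa>(1) axy(2,4)] degree_cmp[OF a(1) axy(3,5)] axy(6)
      by (simp add: dadd_def fun_eq_iff)
    then have "d x = dadd (basis j) (\<lambda>i. d x i - basis j i)"
      using j(2) by (auto simp: dadd_def basis_def fun_eq_iff)
    then obtain e x' where e: "e \<in> Mor" "x' \<in> Mor" "s e = r x'" "cmp e x' = x" "d e = basis j"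
      by (rule factorisation[OF axy(2)])
    have "r e = r \<kappa>" using r_cmp[OF e(1-3)] e(4) axy(4) \<gamma>\<kappa>(3) by simp
    then obtain f where "f \<in> Mor" "r f = s p" "d f = basis j"
      using locally_convex_transport_edge[OF lc \<open>k < n\<close>, of j \<kappa> "d p k" e] j(1) \<gamma>\<kappa>(2,6) e(1,5) s\<kappa>
      by auto
    moreover have "d p j < d a j" using j \<gamma>\<kappa>(5) by auto
    ultimately show ?thesis using axy(1) j(1) by blast
  qed
qed

lemma common_extension_by_descent:
  assumes "finite F" "finite J"
    and step: "\<And>p. p \<in> Mor \<Longrightarrow> r p = v \<Longrightarrow> (\<exists>a\<in>F. common_extension p a) \<or>
      (\<exists>a\<in>F. \<exists>j\<in>J. \<exists>f\<in>Mor. r f = s p \<and> d f = basis j \<and> d p j < d a j)"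
  shows "p \<in> Mor \<Longrightarrow> r p = v \<Longrightarrow> \<exists>a\<in>F. common_extension p a"
proof -
  define M where "M = Max (insert 0 ((\<lambda>(a, j). d a j) ` (F \<times> J)))"
  have M: "d a j \<le> M" if "a \<in> F" "j \<in> J" for a j
    unfolding M_def using assms(1,2) that by (intro Max_ge) auto
  show "p \<in> Mor \<Longrightarrow> r p = v \<Longrightarrow> \<exists>a\<in>F. common_extension p a"
  proof (induction "\<Sum>j\<in>J. M - d p j" arbitrary: p rule: less_induct)
    case less
    show ?case
    proof (cases "\<exists>a\<in>F. common_extension p a")
      case False
      then obtain a j f where a: "a \<in> F" "j \<in> J" "f \<in> Mor" "r f = s p" "d f = basis j"
          "d p j < d a j"
        using step less.prems by blast
      have pf: "cmp p f \<in> Mor" "r (cmp p f) = v" "d (cmp p f) = dadd (d p) (basis j)"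
        using cmp_in_Mor[of p f] r_cmp[of p f] degree_cmp[of p f] a(3-5) less.prems by simp_all
      have "(\<Sum>i\<in>J. M - d (cmp p f) i) < (\<Sum>i\<in>J. M - d p i)"
      proof (rule sum_strict_mono_ex1[OF assms(2)])
        show "\<forall>i\<in>J. M - d (cmp p f) i \<le> M - d p i" by (simp add: pf(3) dadd_def diff_le_mono2)
        show "\<exists>i\<in>J. M - d (cmp p f) i < M - d p i"
          using a M[of a j] by (intro bexI[of _ j]) (auto simp: pf(3) dadd_def basis_def)
      qed
      then obtain b where "b \<in> F" "common_extension (cmp p f) b"
        using less.hyps pf(1,2) by blast
      then show ?thesis using common_extension_of_cmp[OF less.prems(1) a(3)] a(4) by auto
    qed
  qed
qed

theorem exhaustive_if_exhaustive_in_coordinate_slice: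
  assumes "locally_convex n Mor r s d" "k < n" "finite F"
    and "F \<subseteq> {\<mu> \<in> Mor. d \<mu> k = 0 \<and> r \<mu> = v}"
    and "exhaustive {\<mu> \<in> Mor. d \<mu> k = 0} r s cmp v F"
  shows "exhaustive Mor r s cmp v F"
  unfolding exhaustive_iff_common_extension
  using common_extension_by_descent[OF \<open>finite F\<close> _ common_extension_or_edge[OF assms(1,2,4,5)]]
  by simp

end

theorem lemma3p17:
  fixes k :: nat
    and Obj :: "'v set" and Mor :: "'a set"
    and r s :: "'a \<Rightarrow> 'v" and cmp :: "'a \<Rightarrow> 'a \<Rightarrow> 'a" and idm :: "'v \<Rightarrow> 'a"
    and d :: "'a \<Rightarrow> nat \<Rightarrow> nat"
    and v :: 'v and F :: "'a set"
  assumes "is_kgraph (Suc k) Obj Mor r s cmp idm d"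
    and "locally_convex (Suc k) Mor r s d"
    and "v \<in> Obj"
    and "finite F"
    and "F \<subseteq> {\<mu> \<in> Mor. d \<mu> k = 0 \<and> r \<mu> = v}"
    and "exhaustive {\<mu> \<in> Mor. d \<mu> k = 0} r s cmp v F"
  shows "exhaustive Mor r s cmp v F"
proof -
  interpret kgraph "Suc k" Obj Mor r s cmp idm d using assms(1) by unfold_locales
  show ?thesis
    using exhaustive_if_exhaustive_in_coordinate_slice[OF assms(2) lessI assms(4-6)] .
qed

end
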